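(* Let points $0,1,2,3$ of $\mathbb{P}^3(\mathbb{C})$ be represented by the standard basis vectors $e_0,e_1,e_2,e_3$ and points $i=4,\dots,9$ by arbitrary vectors $(x_i,y_i,z_i,w_i)$ (and $(x_i,y_i,z_i,w_i)$ for $i\le 3$ the corresponding standard basis coordinates). Let $N$ be the $10\times10$ matrix whose row $i$ ($i=0,\dots,9$) is $$(x_i^2,\ x_iy_i,\ x_iz_i,\ x_iw_i,\ y_i^2,\ y_iz_i,\ y_iw_i,\ z_i^2,\ z_iw_i,\ w_i^2),$$ let $M$ be the $4\times4$ matrix whose row indexed by $j\in\{6,7,8,9\}$ (in increasing order) is $\big([015j][234j],[012j][345j],[024j][135j],[045j][123j]\big)$, and let $Q=-x_5y_4z_5w_4 + x_4y_5z_5w_4 + x_5y_4z_4w_5 - x_4y_4z_5w_5$. Then $\det M = Q\cdot\det N$.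
   Context: $[abcd]$ denotes the determinant of the $4\times4$ matrix whose columns are the representative vectors of the points $a,b,c,d$. *)

theory Defs
  imports "Jordan_Normal_Form.Determinant"
begin

definition pt :: "(nat \<Rightarrow> complex) \<Rightarrow> (nat \<Rightarrow> complex) \<Rightarrow> (nat \<Rightarrow> complex) \<Rightarrow> (nat \<Rightarrow> complex)
    \<Rightarrow> nat \<Rightarrow> complex list" where
  "pt x y z w i = [x i, y i, z i, w i]"

definition bracket :: "(nat \<Rightarrow> complex list) \<Rightarrow> nat \<Rightarrow> nat \<Rightarrow> nat \<Rightarrow> nat \<Rightarrow> complex" where
  "bracket P a b c d = det (mat 4 4 (\<lambda>(r, s). P ([a, b, c, d] ! s) ! r))"

definition matN :: "(nat \<Rightarrow> complex) \<Rightarrow> (nat \<Rightarrow> complex) \<Rightarrow> (nat \<Rightarrow> complex) \<Rightarrow> (nat \<Rightarrow> complex)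
    \<Rightarrow> complex mat" where
  "matN x y z w = mat 10 10 (\<lambda>(i, k).
     [x i ^ 2, x i * y i, x i * z i, x i * w i, y i ^ 2, y i * z i, y i * w i,
      z i ^ 2, z i * w i, w i ^ 2] ! k)"

definition matM :: "(nat \<Rightarrow> complex) \<Rightarrow> (nat \<Rightarrow> complex) \<Rightarrow> (nat \<Rightarrow> complex) \<Rightarrow> (nat \<Rightarrow> complex)
    \<Rightarrow> complex mat" where
  "matM x y z w = mat 4 4 (\<lambda>(r, k). let P = pt x y z w; j = r + 6 in
     [bracket P 0 1 5 j * bracket P 2 3 4 j,
      bracket P 0 1 2 j * bracket P 3 4 5 j,
      bracket P 0 2 4 j * bracket P 1 3 5 j,
      bracket P 0 4 5 j * bracket P 1 2 3 j] ! k)"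

end

theory Submission
  imports Defs
begin

text \<open>Since the points 0, 1, 2, 3 form the standard frame, the rows of N belonging to them
  are unit vectors at the columns of x^2, y^2, z^2, w^2, so det N is the 6\<times>6 determinant
  of the mixed monomials xy, xz, xw, yz, yw, zw at the points 4, \<dots>, 9. Every bracket
  containing frame points collapses to a minor of the remaining coordinates, so both sides
  become explicit polynomials in the coordinates of the points 4, \<dots>, 9, whose equality is
  a ring identity.\<close>

lemma mat_delete_mat:
  "mat_delete (mat m n f) i j =
   mat (m - 1) (n - 1) (\<lambda>(i', j'). f (if i' < i then i' else Suc i', if j' < j then j' else Suc j'))"
  unfolding mat_delete_def by (rule eq_matI) auto

lemma det_mat_expand_first_row:
  assumes "0 < n"
  shows "det (mat n n f) =
    (\<Sum>k<n. (-1) ^ k * f (0, k) * det (mat (n - 1) (n - 1) (\<lambda>(i, j). f (Suc i, if j < k then j else Suc j))))"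
proof -
  have "det (mat n n f) = (\<Sum>k<n. mat n n f $$ (0, k) * cofactor (mat n n f) 0 k)"
    using assms by (intro laplace_expansion_row) auto
  also have "\<dots> = (\<Sum>k<n. (-1) ^ k * f (0, k) * det (mat (n - 1) (n - 1) (\<lambda>(i, j). f (Suc i, if j < k then j else Suc j))))"
    using assms by (intro sum.cong) (auto simp: cofactor_def mat_delete_mat)
  finally show ?thesis .
qed

lemma det_mat_rows_first_row_unit:
  fixes r :: "nat \<Rightarrow> 'a :: comm_ring_1 list"
  assumes "k < n" and "\<And>i. length (r i) = n" and "r 0 = replicate k 0 @ 1 # replicate (n - Suc k) 0"
  shows "det (mat n n (\<lambda>(i, j). r i ! j)) =
    (-1) ^ k * det (mat (n - 1) (n - 1) (\<lambda>(i, j). (take k (r (Suc i)) @ drop (Suc k) (r (Suc i))) ! j))"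
proof -
  have first_row: "r 0 ! j = (if j = k then 1 else 0)" if "j < n" for j
    using that assms(1) by (auto simp: assms(3) nth_append)
  have "det (mat n n (\<lambda>(i, j). r i ! j)) =
      (\<Sum>j<n. (-1) ^ j * r 0 ! j * det (mat (n - 1) (n - 1) (\<lambda>(i, l). r (Suc i) ! (if l < j then l else Suc l))))"
    using assms(1) by (simp add: det_mat_expand_first_row)
  also have "\<dots> = (-1) ^ k * det (mat (n - 1) (n - 1) (\<lambda>(i, l). r (Suc i) ! (if l < k then l else Suc l)))"
    using assms(1) by (subst sum.remove[of _ k]) (auto simp: first_row intro!: sum.neutral)
  also have "mat (n - 1) (n - 1) (\<lambda>(i, l). r (Suc i) ! (if l < k then l else Suc l)) =
      mat (n - 1) (n - 1) (\<lambda>(i, l). (take k (r (Suc i)) @ drop (Suc k) (r (Suc i))) ! l)"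
    using assms(1,2) by (intro eq_matI) (auto simp: nth_append min_def)
  finally show ?thesis .
qed

lemma det_mat_4:
  "det (mat 4 4 f) =
     f (0, 0) * (f (1, 1) * (f (2, 2) * f (3, 3) - f (2, 3) * f (3, 2)) - f (1, 2) * (f (2, 1) * f (3, 3) - f (2, 3) * f (3, 1)) + f (1, 3) * (f (2, 1) * f (3, 2) - f (2, 2) * f (3, 1)))
   - f (0, 1) * (f (1, 0) * (f (2, 2) * f (3, 3) - f (2, 3) * f (3, 2)) - f (1, 2) * (f (2, 0) * f (3, 3) - f (2, 3) * f (3, 0)) + f (1, 3) * (f (2, 0) * f (3, 2) - f (2, 2) * f (3, 0)))
   + f (0, 2) * (f (1, 0) * (f (2, 1) * f (3, 3) - f (2, 3) * f (3, 1)) - f (1, 1) * (f (2, 0) * f (3, 3) - f (2, 3) * f (3, 0)) + f (1, 3) * (f (2, 0) * f (3, 1) - f (2, 1) * f (3, 0)))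
   - f (0, 3) * (f (1, 0) * (f (2, 1) * f (3, 2) - f (2, 2) * f (3, 1)) - f (1, 1) * (f (2, 0) * f (3, 2) - f (2, 2) * f (3, 0)) + f (1, 2) * (f (2, 0) * f (3, 1) - f (2, 1) * f (3, 0)))"
  for f :: "nat \<times> nat \<Rightarrow> 'a :: comm_ring_1"
  by (simp add: det_mat_expand_first_row lessThan_nat_numeral numeral_eq_Suc algebra_simps)

locale standard_frame =
  fixes x y z w :: "nat \<Rightarrow> complex"
  assumes std: "\<And>i. i < 4 \<Longrightarrow>
      x i = (if i = 0 then 1 else 0) \<and> y i = (if i = 1 then 1 else 0) \<and>
      z i = (if i = 2 then 1 else 0) \<and> w i = (if i = 3 then 1 else 0)"
begin

lemma coords:
  "x 0 = 1" "y 0 = 0" "z 0 = 0" "w 0 = 0"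
  "x 1 = 0" "y 1 = 1" "z 1 = 0" "w 1 = 0"
  "x 2 = 0" "y 2 = 0" "z 2 = 1" "w 2 = 0"
  "x 3 = 0" "y 3 = 0" "z 3 = 0" "w 3 = 1"
  using std[of 0] std[of 1] std[of 2] std[of 3] by simp_all

lemmas coords_Suc = coords(5-16)[unfolded One_nat_def numeral_2_eq_2 numeral_3_eq_3]

lemma bracket_standard_frame:
  "bracket (pt x y z w) 0 1 a b = z a * w b - w a * z b"
  "bracket (pt x y z w) 2 3 a b = x a * y b - y a * x b"
  "bracket (pt x y z w) 0 2 a b = w a * y b - y a * w b"
  "bracket (pt x y z w) 1 3 a b = z a * x b - x a * z b"
  "bracket (pt x y z w) 0 1 2 a = w a"
  "bracket (pt x y z w) 1 2 3 a = - x a"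
  "bracket (pt x y z w) 0 a b c =
     y a * (z b * w c - w b * z c) - z a * (y b * w c - w b * y c) + w a * (y b * z c - z b * y c)"
  "bracket (pt x y z w) 3 a b c =
     - (x a * (y b * z c - z b * y c) - y a * (x b * z c - z b * x c) + z a * (x b * y c - y b * x c))"
  by (simp_all add: bracket_def pt_def det_mat_4 coords coords_Suc algebra_simps)

lemma det_matN_eq_det_mixed_monomials:
  "det (matN x y z w) = det (mat 6 6 (\<lambda>(i, k).
     [x (i + 4) * y (i + 4), x (i + 4) * z (i + 4), x (i + 4) * w (i + 4),
      y (i + 4) * z (i + 4), y (i + 4) * w (i + 4), z (i + 4) * w (i + 4)] ! k))"
  unfolding matN_def
  \<comment> \<open>0, 3, 5, 6 are the columns of x^2, y^2, z^2, w^2 after the preceding deletions\<close>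
  apply (subst det_mat_rows_first_row_unit[where k = 0]; simp add: coords coords_Suc numeral_eq_Suc)
  apply (subst det_mat_rows_first_row_unit[where k = 3]; simp add: coords coords_Suc numeral_eq_Suc)
  apply (subst det_mat_rows_first_row_unit[where k = 5]; simp add: coords coords_Suc numeral_eq_Suc)
  apply (subst det_mat_rows_first_row_unit[where k = 6]; simp add: coords coords_Suc numeral_eq_Suc)
  done

end

theorem mainTheorem7:
  fixes x y z w :: "nat \<Rightarrow> complex"
  assumes std: "\<And>i. i < 4 \<Longrightarrow>
      x i = (if i = 0 then 1 else 0) \<and> y i = (if i = 1 then 1 else 0) \<and>
      z i = (if i = 2 then 1 else 0) \<and> w i = (if i = 3 then 1 else 0)"
  shows "det (matM x y z w) =
    (- x 5 * y 4 * z 5 * w 4 + x 4 * y 5 * z 5 * w 4 + x 5 * y 4 * z 4 * w 5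
     - x 4 * y 4 * z 5 * w 5) * det (matN x y z w)"
proof -
  interpret standard_frame x y z w
    using std by unfold_locales
  show ?thesis
    unfolding det_matN_eq_det_mixed_monomials matM_def Let_def bracket_standard_frame
    by (simp add: det_mat_expand_first_row[of 6] det_mat_expand_first_row[of 5]
        lessThan_nat_numeral det_mat_4 coords coords_Suc)
      Groebner_Basis.algebra
qed

end
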